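(* Let $k$ be a field of characteristic zero, let $q\in k\setminus\{0\}$, and let $f=a/b\in k(x,y)$ with $a,b\in k[x,y]$, $b\neq 0$. Let $d\in k[y]$ be an irreducible polynomial which divides $b$. Then: (i) $\operatorname{res}_{D_y}(\sigma_x(f),d)=\sigma_x(\operatorname{res}_{D_y}(f,d))$; (ii) $\operatorname{res}_{D_y}(\tau_{x,q}(f),d)=\tau_{x,q}(\operatorname{res}_{D_y}(f,d))$; (iii) $\operatorname{res}_{\sigma_y}(\tau_{x,q}(f),d,j)=\tau_{x,q}(\operatorname{res}_{\sigma_y}(f,d,j))$ for all $j\in\mathbb{N}$.
   Context: On $k(x,y)$ define the automorphisms $\sigma_x(f(x,y))=f(x+1,y)$, $\sigma_y(f(x,y))=f(x,y+1)$ and $\tau_{x,q}(f(x,y))=f(qx,y)$. Regard $k(x,y)=K(y)$ with $K=k(x)$. $D_y$-residue: every $f\in K(y)$ can be written uniquely as $f=p+\sum_{i=1}^n\sum_{j=1}^{m_i} a_{i,j}/d_i^j$ with $p,a_{i,j}\in K[y]$, $\deg_y(a_{i,j})<\deg_y(d_i)$, and the $d_i$ distinct monic irreducible polynomials in $K[y]$ (irreducible partial fraction decomposition); $\operatorname{res}_{D_y}(f,d_i):=a_{i,1}$ (and the residue at an irreducible $d$ not among the $d_i$ is $0$). $\sigma_y$-residue: two polynomials $p,p'$ are $\sigma_y$-equivalent if $p=\sigma_y^i(p')$ for some $i\in\mathbb{Z}$. Writing the irreducible partial fraction decomposition of $f$ with respect to $y$ over $K$ and grouping the terms whose denominators are powers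 of elements of the $\sigma_y$-orbit of the irreducible $d$, one gets uniquely $f=\sum_{j}\sum_{\ell} a_{j,\ell}/\sigma_y^{\ell}(d)^j+R$, where $a_{j,\ell}\in K[y]$, $\deg_y(a_{j,\ell})<\deg_y(d)$, and $R$ has no irreducible factor $\sigma_y$-equivalent to $d$ in its denominator. Then $\operatorname{res}_{\sigma_y}(f,d,j):=\sum_{\ell}\sigma_y^{-\ell}(a_{j,\ell})$, the $\sigma_y$-residue of $f$ at $d$ of multiplicity $j$. *)

theory Defs
  imports "HOL-Computational_Algebra.Polynomial" "HOL-Computational_Algebra.Fraction_Field"
begin

text \<open>Model: k[x] = 'k poly, K = k(x) = 'k poly fract, K[y] = K poly,
  K(y) = k(x,y) = K poly fract.  k[x,y] = 'k poly poly (polynomials in y with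
  coefficients in k[x]).\<close>

definition fract_lift :: "('a::idom \<Rightarrow> 'b::idom) \<Rightarrow> 'a fract \<Rightarrow> 'b fract" where
  "fract_lift h r = (THE s. \<forall>a b. b \<noteq> 0 \<longrightarrow> r = Fract a b \<longrightarrow> s = Fract (h a) (h b))"

definition shiftx_poly :: "'k::field \<Rightarrow> 'k poly \<Rightarrow> 'k poly" where
  "shiftx_poly c p = pcompose p [:c, 1:]"
definition qdil_poly :: "'k::field \<Rightarrow> 'k poly \<Rightarrow> 'k poly" where
  "qdil_poly q p = pcompose p [:0, q:]"

definition sigma_x_K :: "'k::field poly fract \<Rightarrow> 'k poly fract" where
  "sigma_x_K = fract_lift (shiftx_poly 1)"
definition sigma_x_Ky :: "'k::field poly fract poly \<Rightarrow> 'k poly fract poly" where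
  "sigma_x_Ky = map_poly sigma_x_K"
definition sigma_x :: "'k::field poly fract poly fract \<Rightarrow> 'k poly fract poly fract" where
  "sigma_x = fract_lift sigma_x_Ky"

definition tau_x_K :: "'k::field \<Rightarrow> 'k poly fract \<Rightarrow> 'k poly fract" where
  "tau_x_K q = fract_lift (qdil_poly q)"
definition tau_x_Ky :: "'k::field \<Rightarrow> 'k poly fract poly \<Rightarrow> 'k poly fract poly" where
  "tau_x_Ky q = map_poly (tau_x_K q)"
definition tau_x :: "'k::field \<Rightarrow> 'k poly fract poly fract \<Rightarrow> 'k poly fract poly fract" where
  "tau_x q = fract_lift (tau_x_Ky q)"

definition sigma_y_pow :: "int \<Rightarrow> 'K::field poly \<Rightarrow> 'K poly" where
  "sigma_y_pow l p = pcompose p [:of_int l, 1:]"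

definition monic_of :: "'K::field poly \<Rightarrow> 'K poly" where
  "monic_of d = smult (inverse (lead_coeff d)) d"

definition is_pfd :: "'K::field poly fract \<Rightarrow> 'K poly \<Rightarrow> ('K poly \<Rightarrow> nat \<Rightarrow> 'K poly) \<Rightarrow> bool" where
  "is_pfd f p A \<longleftrightarrow>
     finite {(d, j). A d j \<noteq> 0} \<and>
     (\<forall>d j. A d j \<noteq> 0 \<longrightarrow> lead_coeff d = 1 \<and> irreducible d \<and> j \<ge> 1 \<and> degree (A d j) < degree d) \<and>
     f = Fract p 1 + (\<Sum>(d, j)\<in>{(d, j). A d j \<noteq> 0}. Fract (A d j) (d ^ j))"

definition pfd_coeffs :: "'K::field poly fract \<Rightarrow> 'K poly \<Rightarrow> nat \<Rightarrow> 'K poly" where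
  "pfd_coeffs f = (THE A. \<exists>p. is_pfd f p A)"

definition res_D :: "'K::field poly fract \<Rightarrow> 'K poly \<Rightarrow> 'K poly" where
  "res_D f d = pfd_coeffs f (monic_of d) 1"

definition res_sigma :: "'K::field poly fract \<Rightarrow> 'K poly \<Rightarrow> nat \<Rightarrow> 'K poly" where
  "res_sigma f d j =
     (\<Sum>l\<in>{l::int. pfd_coeffs f (sigma_y_pow l (monic_of d)) j \<noteq> 0}.
        sigma_y_pow (- l) (pfd_coeffs f (sigma_y_pow l (monic_of d)) j))"

definition emb_kxy :: "'k::field poly poly \<Rightarrow> 'k poly fract poly" where
  "emb_kxy a = map_poly (\<lambda>c. Fract c 1) a"
definition emb_ky :: "'k::field poly \<Rightarrow> 'k poly poly" where
  "emb_ky d = map_poly (\<lambda>c. [:c:]) d"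

end

theory Submission
  imports Defs
begin

text \<open>Every element of \<open>K(y)\<close> has a unique irreducible partial fraction decomposition:
  existence by splitting the denominator with Bezout identities, uniqueness because a nonzero
  proper part \<open>\<Sum> a/d^j\<close> has a pole at a \<open>d\<close> of maximal multiplicity, hence is not a polynomial.
  The maps \<open>\<sigma>\<^sub>x\<close> and \<open>\<tau>\<^sub>x\<^sub>,\<^sub>q\<close> act on \<open>K(y)\<close> by applying an automorphism \<open>\<phi>\<close> of \<open>K\<close>
  fixing \<open>k\<close> to all coefficients. Such a map sends a decomposition of \<open>f\<close> to one of its image,
  with coefficients \<open>\<phi>(a)\<close> at the denominators \<open>\<phi>(d)\<close>. Since \<open>d \<in> k[y]\<close> and the shifts
  \<open>\<sigma>\<^sub>y\<^sup>l(d)\<close> have coefficients in \<open>k\<close>, they are fixed by \<open>\<phi>\<close>, so by uniqueness all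
  coefficients at \<open>\<sigma>\<^sub>y\<^sup>l(d)\<^sup>j\<close>, and hence both kinds of residue, are mapped by \<open>\<phi>\<close>.\<close>

section \<open>Ring homomorphisms and their extension to fractions\<close>

definition is_ring_hom :: "('a::comm_ring_1 \<Rightarrow> 'b::comm_ring_1) \<Rightarrow> bool" where
  "is_ring_hom h \<longleftrightarrow> (\<forall>x y. h (x + y) = h x + h y) \<and> (\<forall>x y. h (x * y) = h x * h y) \<and> h 1 = 1"

lemma ring_hom_add: "is_ring_hom h \<Longrightarrow> h (x + y) = h x + h y"
  by (simp add: is_ring_hom_def)

lemma ring_hom_mult: "is_ring_hom h \<Longrightarrow> h (x * y) = h x * h y"
  by (simp add: is_ring_hom_def)

lemma ring_hom_1: "is_ring_hom h \<Longrightarrow> h 1 = 1"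
  by (simp add: is_ring_hom_def)

lemma ring_hom_0: "is_ring_hom h \<Longrightarrow> h 0 = 0"
  using ring_hom_add[of h 0 0] by simp

lemma ring_hom_uminus: "is_ring_hom h \<Longrightarrow> h (- x) = - h x"
  using ring_hom_add[of h x "- x"] ring_hom_0[of h] by (simp add: add_eq_0_iff)

lemma ring_hom_sum: "is_ring_hom h \<Longrightarrow> h (sum f A) = (\<Sum>x\<in>A. h (f x))"
  by (induction A rule: infinite_finite_induct) (auto simp: ring_hom_0 ring_hom_add)

lemma ring_hom_power: "is_ring_hom h \<Longrightarrow> h (x ^ n) = h x ^ n"
  by (induction n) (auto simp: ring_hom_1 ring_hom_mult)

lemma ring_hom_of_nat: "is_ring_hom h \<Longrightarrow> h (of_nat n) = of_nat n"
  by (induction n) (auto simp: ring_hom_0 ring_hom_1 ring_hom_add)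

lemma ring_hom_of_int: "is_ring_hom h \<Longrightarrow> h (of_int n) = of_int n"
  by (cases n rule: int_cases) (auto simp: ring_hom_of_nat ring_hom_uminus simp del: of_nat_Suc)

lemma ring_hom_inverse:
  fixes h :: "'a::field \<Rightarrow> 'b::field"
  assumes h: "is_ring_hom h"
  shows "h (inverse x) = inverse (h x)"
proof (cases "x = 0")
  case True
  then show ?thesis by (simp add: ring_hom_0 h)
next
  case False
  then have "h x * h (inverse x) = 1"
    by (simp flip: ring_hom_mult[OF h] add: ring_hom_1[OF h])
  then show ?thesis by (metis inverse_unique)
qed

lemma ring_hom_coeff_map_poly: "is_ring_hom h \<Longrightarrow> coeff (map_poly h p) n = h (coeff p n)"
  by (simp add: coeff_map_poly ring_hom_0)

lemma ring_hom_map_poly: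
  assumes h: "is_ring_hom h"
  shows "is_ring_hom (map_poly h)"
proof -
  have "map_poly h (p + q) = map_poly h p + map_poly h q" for p q
    by (rule poly_eqI) (simp add: ring_hom_coeff_map_poly h ring_hom_add)
  moreover have "map_poly h (p * q) = map_poly h p * map_poly h q" for p q
    by (rule poly_eqI) (simp add: ring_hom_coeff_map_poly h ring_hom_sum ring_hom_mult coeff_mult)
  ultimately show ?thesis
    using h by (simp add: is_ring_hom_def ring_hom_1)
qed

lemma ring_hom_pcompose: "is_ring_hom (\<lambda>p. pcompose p r)"
  by (simp add: is_ring_hom_def pcompose_add pcompose_mult pcompose_1)

lemma map_poly_pcompose:
  assumes h: "is_ring_hom h"
  shows "map_poly h (pcompose p r) = pcompose (map_poly h p) (map_poly h r)"
proof (induction p rule: pCons_induct)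
  case 0
  then show ?case by simp
next
  case (pCons a p)
  have hp: "is_ring_hom (map_poly h)" by (rule ring_hom_map_poly[OF h])
  have "map_poly h [:a:] = [:h a:]" by (simp add: map_poly_pCons ring_hom_0[OF h])
  then show ?case
    by (simp add: pcompose_pCons ring_hom_add[OF hp] ring_hom_mult[OF hp] pCons.IH
        map_poly_pCons ring_hom_0[OF h])
qed

definition inverse_ring_homs :: "('a::comm_ring_1 \<Rightarrow> 'a) \<Rightarrow> ('a \<Rightarrow> 'a) \<Rightarrow> bool" where
  "inverse_ring_homs h g \<longleftrightarrow>
     is_ring_hom h \<and> is_ring_hom g \<and> (\<forall>x. g (h x) = x) \<and> (\<forall>x. h (g x) = x)"

lemma inverse_ring_homs_sym: "inverse_ring_homs h g \<Longrightarrow> inverse_ring_homs g h"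
  by (auto simp: inverse_ring_homs_def)

lemma inverse_ring_homs_left: "inverse_ring_homs h g \<Longrightarrow> g (h x) = x"
  by (simp add: inverse_ring_homs_def)

lemma inverse_ring_homs_right: "inverse_ring_homs h g \<Longrightarrow> h (g x) = x"
  by (simp add: inverse_ring_homs_def)

lemma inverse_ring_homs_ring_hom: "inverse_ring_homs h g \<Longrightarrow> is_ring_hom h"
  by (simp add: inverse_ring_homs_def)

lemma inverse_ring_homs_inj: "inverse_ring_homs h g \<Longrightarrow> inj h"
  by (metis inverse_ring_homs_left injI)

lemma inverse_ring_homs_eq_0_iff: "inverse_ring_homs h g \<Longrightarrow> h x = 0 \<longleftrightarrow> x = 0"
  by (metis inverse_ring_homs_def inverse_ring_homs_left ring_hom_0)

lemma inverse_ring_homs_is_unit: "inverse_ring_homs h g \<Longrightarrow> is_unit y \<Longrightarrow> is_unit (h y)"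
  by (metis dvdE dvdI inverse_ring_homs_ring_hom ring_hom_1 ring_hom_mult)

lemma inverse_ring_homs_irreducible:
  fixes h :: "'a::{comm_ring_1,algebraic_semidom} \<Rightarrow> 'a"
  assumes hg: "inverse_ring_homs h g" and irr: "irreducible x"
  shows "irreducible (h x)"
proof -
  have gh: "inverse_ring_homs g h" by (rule inverse_ring_homs_sym[OF hg])
  have "h x \<noteq> 0"
    using irr inverse_ring_homs_eq_0_iff[OF hg] by (auto simp: irreducible_def)
  moreover have "\<not> is_unit (h x)"
    using inverse_ring_homs_is_unit[OF gh, of "h x"] irr inverse_ring_homs_left[OF hg]
    by (auto simp: irreducible_def)
  moreover have "is_unit a \<or> is_unit b" if "h x = a * b" for a b
  proof -
    have "x = g a * g b"
      using that inverse_ring_homs_left[OF hg, of x] ring_hom_mult[OF inverse_ring_homs_ring_hom[OF gh]]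
      by metis
    then have "is_unit (g a) \<or> is_unit (g b)" using irreducibleD[OF irr] by blast
    then show ?thesis using inverse_ring_homs_is_unit[OF hg] inverse_ring_homs_right[OF hg] by metis
  qed
  ultimately show ?thesis by (auto simp: irreducible_def)
qed

lemma inverse_ring_homs_map_poly:
  assumes hg: "inverse_ring_homs h g"
  shows "inverse_ring_homs (map_poly h) (map_poly g)"
proof -
  have "map_poly g (map_poly h p) = p" "map_poly h (map_poly g p) = p" for p
    by (rule poly_eqI, metis hg ring_hom_coeff_map_poly inverse_ring_homs_def)+
  then show ?thesis
    using hg by (auto simp: inverse_ring_homs_def ring_hom_map_poly)
qed

lemma degree_map_poly_inverse_ring_homs:
  "inverse_ring_homs h g \<Longrightarrow> degree (map_poly h p) = degree p"
  by (rule degree_map_poly) (use inverse_ring_homs_eq_0_iff in blast)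

lemma lead_coeff_map_poly_inverse_ring_homs:
  "inverse_ring_homs h g \<Longrightarrow> lead_coeff (map_poly h p) = h (lead_coeff p)"
  by (simp add: degree_map_poly_inverse_ring_homs ring_hom_coeff_map_poly inverse_ring_homs_ring_hom)

lemma add_Fract_same_denom: "Fract (a::'a::idom) c + Fract b c = Fract (a + b) c"
proof (cases "c = 0")
  case True
  then show ?thesis by (simp add: fract_collapse(3))
next
  case False
  then have "Fract a c + Fract b c = Fract ((a + b) * c) (c * c)"
    by (simp add: algebra_simps)
  also have "\<dots> = Fract (a + b) c"
    using False by (simp add: eq_fract(1))
  finally show ?thesis .
qed

lemma sum_Fract_same_denom: "(\<Sum>i\<in>I. Fract (x i) (c::'a::idom)) = Fract (\<Sum>i\<in>I. x i) c"
  by (induction I rule: infinite_finite_induct) (auto simp: fract_collapse(1) add_Fract_same_denom)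

lemma fract_lift_Fract_nonzero:
  fixes h :: "'a::idom \<Rightarrow> 'b::idom"
  assumes h: "is_ring_hom h" "inj h" and b: "b \<noteq> 0"
  shows "fract_lift h (Fract a b) = Fract (h a) (h b)"
  unfolding fract_lift_def
proof (rule the_equality)
  have hnz: "h y \<noteq> 0" if "y \<noteq> 0" for y
    using h that by (metis injD ring_hom_0)
  show "\<forall>a' b'. b' \<noteq> 0 \<longrightarrow> Fract a b = Fract a' b' \<longrightarrow> Fract (h a) (h b) = Fract (h a') (h b')"
  proof (intro allI impI)
    fix a' b' assume b': "b' \<noteq> 0" and "Fract a b = Fract a' b'"
    then have "a * b' = a' * b" using b by (simp add: eq_fract)
    then have "h a * h b' = h a' * h b" by (metis h(1) ring_hom_mult)
    then show "Fract (h a) (h b) = Fract (h a') (h b')" using hnz b b' by (simp add: eq_fract)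
  qed
qed (use b in blast)

text \<open>No nonzero denominator is needed here, since \<open>Fract a 0 = 0\<close> and \<open>h 0 = 0\<close>.\<close>

lemma fract_lift_Fract:
  fixes h :: "'a::idom \<Rightarrow> 'b::idom"
  assumes h: "is_ring_hom h" "inj h"
  shows "fract_lift h (Fract a b) = Fract (h a) (h b)"
proof (cases "b = 0")
  case True
  have "fract_lift h (Fract a b) = fract_lift h (Fract 0 1)"
    by (simp only: True eq_fract(2))
  also have "\<dots> = Fract (h 0) (h 1)"
    by (rule fract_lift_Fract_nonzero[OF h]) simp
  also have "\<dots> = 0"
    by (simp add: ring_hom_0[OF h(1)] fract_collapse(1))
  finally show ?thesis
    by (simp add: True ring_hom_0[OF h(1)] fract_collapse(3))
qed (rule fract_lift_Fract_nonzero[OF h])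

lemma ring_hom_fract_lift:
  fixes h :: "'a::idom \<Rightarrow> 'b::idom"
  assumes h: "is_ring_hom h" "inj h"
  shows "is_ring_hom (fract_lift h)"
proof -
  have hnz: "h y \<noteq> 0" if "y \<noteq> 0" for y
    using h that by (metis injD ring_hom_0)
  have "fract_lift h (x + y) = fract_lift h x + fract_lift h y" for x y
    by (cases x; cases y) (simp add: fract_lift_Fract h hnz ring_hom_add ring_hom_mult)
  moreover have "fract_lift h (x * y) = fract_lift h x * fract_lift h y" for x y
    by (cases x; cases y) (simp add: fract_lift_Fract h ring_hom_mult)
  moreover have "fract_lift h 1 = 1"
    using fract_lift_Fract[OF h, of 1 1] by (simp add: ring_hom_1[OF h(1)] fract_collapse(2))
  ultimately show ?thesis by (simp add: is_ring_hom_def)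
qed

lemma inverse_ring_homs_fract_lift:
  fixes h :: "'a::idom \<Rightarrow> 'a"
  assumes hg: "inverse_ring_homs h g"
  shows "inverse_ring_homs (fract_lift h) (fract_lift g)"
proof -
  have gh: "inverse_ring_homs g h" by (rule inverse_ring_homs_sym[OF hg])
  have homs: "is_ring_hom h" "inj h" "is_ring_hom g" "inj g"
    using hg gh inverse_ring_homs_ring_hom inverse_ring_homs_inj by blast+
  have "fract_lift g (fract_lift h x) = x" for x
    by (cases x) (simp add: fract_lift_Fract homs inverse_ring_homs_left[OF hg])
  moreover have "fract_lift h (fract_lift g x) = x" for x
    by (cases x) (simp add: fract_lift_Fract homs inverse_ring_homs_right[OF hg])
  ultimately show ?thesis
    using homs by (simp add: inverse_ring_homs_def ring_hom_fract_lift)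
qed

section \<open>Irreducible polynomials over a field\<close>

text \<open>Polynomials over an arbitrary field are not an instance of the library's factorial or gcd
  classes, so primality of irreducible polynomials is derived here from a Bezout identity.\<close>

lemma degree_pos_if_irreducible: "irreducible (d::'a::field poly) \<Longrightarrow> degree d > 0"
  using is_unit_iff_degree[of d] by (auto simp: irreducible_def)

lemma irreducible_poly_bezout:
  fixes d a :: "'a::field poly"
  assumes irr: "irreducible d" and "\<not> d dvd a"
  shows "\<exists>u v. u * d + v * a = 1"
proof -
  define I where "I = {g. (\<exists>u v. g = u * d + v * a) \<and> g \<noteq> 0}"
  have "d \<in> I"
    using irr unfolding I_def irreducible_def by (auto intro: exI[of _ 1] exI[of _ 0])
  then obtain g where gI: "g \<in> I" and min: "\<forall>h. h \<in> I \<longrightarrow> degree g \<le> degree h"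
    using ex_has_least_nat[of "\<lambda>g. g \<in> I" d degree] by iprover
  obtain u v where g: "g = u * d + v * a" and g0: "g \<noteq> 0"
    using gI unfolding I_def by blast
  txt \<open>A nonzero remainder modulo \<open>g\<close> would be a smaller element of \<open>I\<close>.\<close>
  have g_dvd: "g dvd u' * d + v' * a" for u' v'
  proof (rule ccontr)
    define x where "x = u' * d + v' * a"
    assume "\<not> g dvd u' * d + v' * a"
    then have r0: "x mod g \<noteq> 0" by (simp add: x_def dvd_eq_mod_eq_0)
    have "x mod g = x - (x div g) * g" by (simp add: minus_div_mult_eq_mod)
    also have "\<dots> = (u' - (x div g) * u) * d + (v' - (x div g) * v) * a"
      by (simp add: x_def g algebra_simps)
    finally have "x mod g \<in> I" using r0 unfolding I_def by blast
    then have "degree g \<le> degree (x mod g)" using min by blast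
    then show False using degree_mod_less[OF g0, of x] r0 by simp
  qed
  have "g dvd d" "g dvd a"
    using g_dvd[of 1 0] g_dvd[of 0 1] by simp_all
  then obtain c where dc: "d = g * c" by (auto elim: dvdE)
  have "\<not> is_unit c"
  proof
    assume "is_unit c"
    then have "d dvd g" using dc by (simp add: mult_unit_dvd_iff)
    then show False using \<open>g dvd a\<close> assms(2) dvd_trans by blast
  qed
  then have "is_unit g" using irreducibleD[OF irr dc] by blast
  then obtain w where "1 = g * w" by (auto elim: dvdE)
  then have "(w * u) * d + (w * v) * a = 1" by (simp add: g algebra_simps)
  then show ?thesis by blast
qed

lemma irreducible_poly_dvd_mult:
  fixes d a b :: "'a::field poly"
  assumes irr: "irreducible d" and "d dvd a * b"
  shows "d dvd a \<or> d dvd b"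
proof (cases "d dvd a")
  case False
  obtain u v where "u * d + v * a = 1" using irreducible_poly_bezout[OF irr False] by blast
  then have "b = (u * d + v * a) * b" by simp
  also have "\<dots> = (u * b) * d + v * (a * b)" by (simp add: algebra_simps)
  finally have "b = (u * b) * d + v * (a * b)" .
  moreover have "d dvd (u * b) * d + v * (a * b)" using assms(2) by simp
  ultimately show ?thesis by simp
qed simp

lemma irreducible_poly_dvd_power:
  fixes d e :: "'a::field poly"
  assumes irr: "irreducible d" and "d dvd e ^ n"
  shows "d dvd e"
  using assms(2)
proof (induction n)
  case 0
  then show ?case using irr by (simp add: irreducible_def)
next
  case (Suc n)
  then show ?case using irreducible_poly_dvd_mult[OF irr, of e "e ^ n"] by auto
qed

lemma irreducible_poly_dvd_prod:
  fixes d :: "'a::field poly"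
  assumes irr: "irreducible d" and "finite A" and "d dvd prod f A"
  shows "\<exists>x\<in>A. d dvd f x"
  using assms(2,3)
proof (induction A rule: finite_induct)
  case empty
  then show ?case using irr by (simp add: irreducible_def)
next
  case (insert x F)
  then show ?case using irreducible_poly_dvd_mult[OF irr, of "f x" "prod f F"] by auto
qed

lemma monic_irreducible_dvd_imp_eq:
  fixes d e :: "'a::field poly"
  assumes "lead_coeff d = 1" "irreducible d" "lead_coeff e = 1" "irreducible e" "d dvd e"
  shows "d = e"
proof -
  obtain c where ec: "e = d * c" using assms(5) by (auto elim: dvdE)
  have "is_unit c"
    using irreducibleD[OF assms(4) ec] assms(2) by (auto simp: irreducible_def)
  moreover have "lead_coeff c = 1"
    using ec assms(1,3) by (simp add: lead_coeff_mult)
  ultimately have "c = 1"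
    using is_unit_monom_trivial[of c] by (simp add: monom_0 one_pCons)
  then show ?thesis using ec by simp
qed

lemma monic_irreducible_not_dvd_prod_powers:
  fixes d :: "'a::field poly"
  assumes d: "lead_coeff d = 1" "irreducible d" and "finite E" "d \<notin> E"
    and E: "\<And>e. e \<in> E \<Longrightarrow> lead_coeff e = 1 \<and> irreducible e"
  shows "\<not> d dvd (\<Prod>e\<in>E. e ^ k e)"
proof
  assume "d dvd (\<Prod>e\<in>E. e ^ k e)"
  then obtain e where "e \<in> E" "d dvd e ^ k e"
    using irreducible_poly_dvd_prod[OF d(2) \<open>finite E\<close>] by blast
  then have "d = e"
    using irreducible_poly_dvd_power[OF d(2)] monic_irreducible_dvd_imp_eq[OF d] E by blast
  then show False using \<open>e \<in> E\<close> \<open>d \<notin> E\<close> by simp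
qed

section \<open>Partial fraction decompositions\<close>

definition pfd_support :: "('a::zero poly \<Rightarrow> nat \<Rightarrow> 'a poly) \<Rightarrow> ('a poly \<times> nat) set" where
  "pfd_support A = {(d, j). A d j \<noteq> 0}"

definition pfd_sum :: "('a::field poly \<Rightarrow> nat \<Rightarrow> 'a poly) \<Rightarrow> 'a poly fract" where
  "pfd_sum A = (\<Sum>(d, j)\<in>pfd_support A. Fract (A d j) (d ^ j))"

definition admissible_pfd :: "('a::field poly \<Rightarrow> nat \<Rightarrow> 'a poly) \<Rightarrow> bool" where
  "admissible_pfd A \<longleftrightarrow> finite (pfd_support A) \<and>
     (\<forall>d j. A d j \<noteq> 0 \<longrightarrow> lead_coeff d = 1 \<and> irreducible d \<and> j \<ge> 1 \<and> degree (A d j) < degree d)"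

lemma is_pfd_iff: "is_pfd f p A \<longleftrightarrow> admissible_pfd A \<and> f = Fract p 1 + pfd_sum A"
  by (simp add: is_pfd_def admissible_pfd_def pfd_sum_def pfd_support_def)

lemma admissible_pfd_degree_less:
  "admissible_pfd A \<Longrightarrow> irreducible d \<Longrightarrow> degree (A d j) < degree d"
  by (cases "A d j = 0") (auto simp: admissible_pfd_def degree_pos_if_irreducible)

lemma pfd_sum_eq_sum_superset:
  assumes "finite U" "pfd_support A \<subseteq> U"
  shows "pfd_sum A = (\<Sum>(d, j)\<in>U. Fract (A d j) (d ^ j))"
  unfolding pfd_sum_def
  by (rule sum.mono_neutral_left) (use assms in \<open>auto simp: pfd_support_def fract_collapse(1)\<close>)

lemma pfd_sum_add:
  assumes "finite (pfd_support A)" "finite (pfd_support B)"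
  shows "pfd_sum (\<lambda>d j. A d j + B d j) = pfd_sum A + pfd_sum B"
proof -
  let ?U = "pfd_support A \<union> pfd_support B"
  have U: "finite ?U" using assms by simp
  have "pfd_sum (\<lambda>d j. A d j + B d j) = (\<Sum>(d, j)\<in>?U. Fract (A d j + B d j) (d ^ j))"
    by (rule pfd_sum_eq_sum_superset[OF U]) (auto simp: pfd_support_def)
  also have "\<dots> = (\<Sum>(d, j)\<in>?U. Fract (A d j) (d ^ j)) + (\<Sum>(d, j)\<in>?U. Fract (B d j) (d ^ j))"
    by (simp add: sum.distrib[symmetric] add_Fract_same_denom split_def)
  also have "\<dots> = pfd_sum A + pfd_sum B"
    by (simp add: pfd_sum_eq_sum_superset[OF U])
  finally show ?thesis .
qed

lemma pfd_sum_uminus: "pfd_sum (\<lambda>d j. - A d j) = - pfd_sum A"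
  by (simp add: pfd_sum_def pfd_support_def sum_negf[symmetric] split_def)

lemma admissible_pfd_add:
  assumes A: "admissible_pfd A" and B: "admissible_pfd B"
  shows "admissible_pfd (\<lambda>d j. A d j + B d j)"
proof -
  have "pfd_support (\<lambda>d j. A d j + B d j) \<subseteq> pfd_support A \<union> pfd_support B"
    by (auto simp: pfd_support_def)
  then have "finite (pfd_support (\<lambda>d j. A d j + B d j))"
    using A B by (auto simp: admissible_pfd_def intro: finite_subset)
  moreover have "lead_coeff d = 1 \<and> irreducible d \<and> j \<ge> 1 \<and> degree (A d j + B d j) < degree d"
    if "A d j + B d j \<noteq> 0" for d j
  proof -
    have "lead_coeff d = 1 \<and> irreducible d \<and> j \<ge> 1"
      using that A B by (cases "A d j = 0") (auto simp: admissible_pfd_def)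
    then show ?thesis
      using admissible_pfd_degree_less[OF A] admissible_pfd_degree_less[OF B]
      by (simp add: degree_add_less)
  qed
  ultimately show ?thesis by (simp add: admissible_pfd_def)
qed

lemma admissible_pfd_uminus: "admissible_pfd A \<Longrightarrow> admissible_pfd (\<lambda>d j. - A d j)"
  by (simp add: admissible_pfd_def pfd_support_def)

definition pfd_order :: "('a::zero poly \<Rightarrow> nat \<Rightarrow> 'a poly) \<Rightarrow> 'a poly \<Rightarrow> nat" where
  "pfd_order A d = Max {j. A d j \<noteq> 0}"

lemma finite_pfd_exponents: "finite (pfd_support A) \<Longrightarrow> finite {j. A d j \<noteq> 0}"
  by (rule finite_subset[of _ "snd ` pfd_support A"]) (force simp: pfd_support_def)+

lemma le_pfd_order: "finite (pfd_support A) \<Longrightarrow> A d j \<noteq> 0 \<Longrightarrow> j \<le> pfd_order A d"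
  unfolding pfd_order_def by (rule Max_ge) (simp_all add: finite_pfd_exponents)

lemma pfd_order_nonzero: "finite (pfd_support A) \<Longrightarrow> A d j \<noteq> 0 \<Longrightarrow> A d (pfd_order A d) \<noteq> 0"
  using Max_in[OF finite_pfd_exponents, of A d] unfolding pfd_order_def by blast

lemma sum_Fract_powers_common_denom:
  fixes C :: "'a::field poly \<Rightarrow> nat \<Rightarrow> 'a poly"
  assumes "finite S" "Q \<noteq> 0" "\<And>e j. (e, j) \<in> S \<Longrightarrow> e ^ j dvd Q"
  shows "(\<Sum>(e, j)\<in>S. Fract (C e j) (e ^ j)) = Fract (\<Sum>(e, j)\<in>S. C e j * (Q div e ^ j)) Q"
proof -
  have "(\<Sum>(e, j)\<in>S. Fract (C e j) (e ^ j)) = (\<Sum>(e, j)\<in>S. Fract (C e j * (Q div e ^ j)) Q)"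
  proof (rule sum.cong[OF refl], clarify)
    fix e j assume "(e, j) \<in> S"
    then have "e ^ j dvd Q" by (rule assms(3))
    then have "e ^ j \<noteq> 0" "Q = e ^ j * (Q div e ^ j)"
      using assms(2) by (auto dest: dvd_0_left)
    then show "Fract (C e j) (e ^ j) = Fract (C e j * (Q div e ^ j)) Q"
      using assms(2) by (simp add: eq_fract(1) algebra_simps)
  qed
  also have "\<dots> = Fract (\<Sum>(e, j)\<in>S. C e j * (Q div e ^ j)) Q"
    by (simp add: split_def sum_Fract_same_denom)
  finally show ?thesis .
qed

lemma irreducible_dvd_numerator_if_Fract_eq:
  fixes d :: "'a::field poly"
  assumes "irreducible d" "\<not> d dvd P" "P \<noteq> 0" "Fract c (d ^ Suc k) = Fract n (d ^ k * P)"
  shows "d dvd c"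
proof -
  have "d \<noteq> 0" using assms(1) by auto
  then have "d ^ k * (c * P) = d ^ k * (n * d)"
    using assms(3,4) by (simp add: eq_fract(1) algebra_simps)
  then have "c * P = d * n" using \<open>d \<noteq> 0\<close> by (simp add: mult.commute)
  then have "d dvd c * P" by (metis dvd_triv_left)
  then show ?thesis using irreducible_poly_dvd_mult assms(1,2) by blast
qed

lemma pfd_sum_split_top_term:
  fixes C :: "'a::field poly \<Rightarrow> nat \<Rightarrow> 'a poly"
  assumes C: "admissible_pfd C" and Cm: "C d0 m \<noteq> 0" and m: "m = pfd_order C d0"
  obtains N P where "pfd_sum C = Fract (C d0 m) (d0 ^ m) + Fract N (d0 ^ (m - 1) * P)"
    and "P \<noteq> 0" and "\<not> d0 dvd P"
proof -
  have fin: "finite (pfd_support C)" using C by (simp add: admissible_pfd_def)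
  have d0: "lead_coeff d0 = 1" "irreducible d0" using C Cm by (auto simp: admissible_pfd_def)
  define E where "E = fst ` pfd_support C - {d0}"
  have E: "finite E" "d0 \<notin> E" "\<And>e. e \<in> E \<Longrightarrow> lead_coeff e = 1 \<and> irreducible e"
    using fin C by (auto simp: E_def pfd_support_def admissible_pfd_def)
  define P where "P = (\<Prod>e\<in>E. e ^ pfd_order C e)"
  define Q where "Q = d0 ^ (m - 1) * P"
  define S where "S = pfd_support C - {(d0, m)}"
  have "e \<noteq> 0" if "e \<in> E" for e using E(3)[OF that] by auto
  then have "P \<noteq> 0" by (simp add: P_def E(1))
  then have "Q \<noteq> 0" using d0(1) by (auto simp: Q_def)
  have dvd_Q: "e ^ j dvd Q" if "(e, j) \<in> S" for e j
  proof (cases "e = d0")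
    case True
    then have "j \<le> m - 1"
      using that le_pfd_order[OF fin, of e j] by (auto simp: S_def pfd_support_def m)
    then show ?thesis using True by (simp add: Q_def le_imp_power_dvd)
  next
    case False
    then have "e \<in> E" and "j \<le> pfd_order C e"
      using that le_pfd_order[OF fin, of e j] by (force simp: E_def S_def pfd_support_def)+
    then have "e ^ j dvd P"
      unfolding P_def using E(1) by (meson dvd_prodI dvd_trans le_imp_power_dvd)
    then show ?thesis by (simp add: Q_def)
  qed
  have "(d0, m) \<in> pfd_support C" using Cm by (simp add: pfd_support_def)
  then have "pfd_sum C = Fract (C d0 m) (d0 ^ m) + (\<Sum>(e, j)\<in>S. Fract (C e j) (e ^ j))"
    unfolding pfd_sum_def S_def by (simp add: sum.remove[OF fin])
  also have "(\<Sum>(e, j)\<in>S. Fract (C e j) (e ^ j)) = Fract (\<Sum>(e, j)\<in>S. C e j * (Q div e ^ j)) Q"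
    using fin \<open>Q \<noteq> 0\<close> dvd_Q by (intro sum_Fract_powers_common_denom) (auto simp: S_def)
  finally have "pfd_sum C = Fract (C d0 m) (d0 ^ m) + Fract (\<Sum>(e, j)\<in>S. C e j * (Q div e ^ j)) (d0 ^ (m - 1) * P)"
    unfolding Q_def .
  moreover have "\<not> d0 dvd P"
    unfolding P_def by (rule monic_irreducible_not_dvd_prod_powers[OF d0 E])
  ultimately show ?thesis using that \<open>P \<noteq> 0\<close> by blast
qed

lemma pfd_sum_eq_poly_imp_zero:
  fixes C :: "'a::field poly \<Rightarrow> nat \<Rightarrow> 'a poly"
  assumes C: "admissible_pfd C" and eq: "pfd_sum C = Fract r 1"
  shows "C d0 j0 = 0"
proof (rule ccontr)
  assume "C d0 j0 \<noteq> 0"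
  define m where "m = pfd_order C d0"
  have "finite (pfd_support C)" using C by (simp add: admissible_pfd_def)
  then have Cm: "C d0 m \<noteq> 0"
    unfolding m_def using \<open>C d0 j0 \<noteq> 0\<close> by (rule pfd_order_nonzero)
  then have d0: "irreducible d0" "m \<ge> 1" "degree (C d0 m) < degree d0"
    using C by (auto simp: admissible_pfd_def)
  obtain N P where split: "pfd_sum C = Fract (C d0 m) (d0 ^ m) + Fract N (d0 ^ (m - 1) * P)"
    and "P \<noteq> 0" "\<not> d0 dvd P"
    using pfd_sum_split_top_term[OF C Cm m_def] .
  define Q where "Q = d0 ^ (m - 1) * P"
  have "Q \<noteq> 0" using d0(1) \<open>P \<noteq> 0\<close> by (auto simp: Q_def)
  have "Fract (C d0 m) (d0 ^ m) = Fract r 1 - Fract N Q"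
    using eq split by (simp add: Q_def eq_diff_eq)
  also have "\<dots> = Fract (r * Q - N) Q"
    using \<open>Q \<noteq> 0\<close> by simp
  finally have "Fract (C d0 m) (d0 ^ Suc (m - 1)) = Fract (r * Q - N) (d0 ^ (m - 1) * P)"
    using d0(2) by (simp add: Q_def)
  then have "d0 dvd C d0 m"
    by (rule irreducible_dvd_numerator_if_Fract_eq[OF d0(1) \<open>\<not> d0 dvd P\<close> \<open>P \<noteq> 0\<close>])
  then have "degree d0 \<le> degree (C d0 m)" using Cm by (rule dvd_imp_degree_le)
  then show False using d0(3) by simp
qed

lemma is_pfd_unique:
  assumes "is_pfd f p A" "is_pfd f q B"
  shows "A = B"
proof -
  have A: "admissible_pfd A" and fA: "f = Fract p 1 + pfd_sum A"
    and B: "admissible_pfd B" and fB: "f = Fract q 1 + pfd_sum B"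
    using assms by (simp_all add: is_pfd_iff)
  define D where "D = (\<lambda>d j. A d j + - B d j)"
  have "pfd_sum D = pfd_sum A + pfd_sum (\<lambda>d j. - B d j)"
    unfolding D_def using A B by (intro pfd_sum_add) (simp_all add: admissible_pfd_def pfd_support_def)
  also have "\<dots> = Fract q 1 - Fract p 1"
  proof -
    have group_eq: "x + - y = b - a" if "a + x = b + y" for a b x y :: "'a poly fract"
      using that by (simp add: algebra_simps)
    show ?thesis unfolding pfd_sum_uminus by (rule group_eq) (use fA fB in simp)
  qed
  also have "\<dots> = Fract (q - p) 1"
    by simp
  finally have "D d j = 0" for d j
    using pfd_sum_eq_poly_imp_zero admissible_pfd_add[OF A admissible_pfd_uminus[OF B]]
    unfolding D_def by blast
  then show ?thesis by (auto simp: D_def fun_eq_iff)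
qed

definition has_pfd :: "'a::field poly fract \<Rightarrow> bool" where
  "has_pfd f \<longleftrightarrow> (\<exists>p A. is_pfd f p A)"

lemma is_pfd_Fract_1: "is_pfd (Fract p 1) p (\<lambda>_ _. 0)"
  by (simp add: is_pfd_iff admissible_pfd_def pfd_support_def pfd_sum_def)

lemma is_pfd_add:
  assumes "is_pfd f p A" "is_pfd g q B"
  shows "is_pfd (f + g) (p + q) (\<lambda>d j. A d j + B d j)"
proof -
  have A: "admissible_pfd A" and fA: "f = Fract p 1 + pfd_sum A"
    and B: "admissible_pfd B" and gB: "g = Fract q 1 + pfd_sum B"
    using assms by (simp_all add: is_pfd_iff)
  have "f + g = (Fract p 1 + Fract q 1) + (pfd_sum A + pfd_sum B)"
    using fA gB by (simp add: algebra_simps)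
  also have "\<dots> = Fract (p + q) 1 + pfd_sum (\<lambda>d j. A d j + B d j)"
    using A B by (simp add: add_Fract_same_denom pfd_sum_add admissible_pfd_def del: add_fract)
  finally show ?thesis using admissible_pfd_add[OF A B] by (simp add: is_pfd_iff)
qed

lemma has_pfd_add: "has_pfd f \<Longrightarrow> has_pfd g \<Longrightarrow> has_pfd (f + g)"
  unfolding has_pfd_def using is_pfd_add by blast

lemma has_pfd_Fract_reduced:
  fixes d c :: "'a::field poly"
  assumes "lead_coeff d = 1" "irreducible d" "j \<ge> 1" "degree c < degree d"
  shows "has_pfd (Fract c (d ^ j))"
proof -
  define A where "A = (\<lambda>e i. if e = d \<and> i = j then c else 0)"
  have "pfd_support A \<subseteq> {(d, j)}" by (auto simp: pfd_support_def A_def)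
  then have "admissible_pfd A"
    using assms by (auto simp: admissible_pfd_def A_def intro: finite_subset)
  moreover have "pfd_sum A = Fract c (d ^ j)"
    by (subst pfd_sum_eq_sum_superset[of "{(d, j)}"]) (auto simp: pfd_support_def A_def)
  ultimately have "is_pfd (Fract c (d ^ j)) 0 A" by (simp add: is_pfd_iff fract_collapse(1))
  then show ?thesis unfolding has_pfd_def by blast
qed

text \<open>The \<open>d\<close>-adic expansion of the numerator.\<close>

lemma has_pfd_Fract_irreducible_power:
  fixes d :: "'a::field poly"
  assumes d: "lead_coeff d = 1" "irreducible d"
  shows "has_pfd (Fract w (d ^ k))"
proof (induction k arbitrary: w)
  case 0
  then show ?case using is_pfd_Fract_1[of w] unfolding has_pfd_def by auto
next
  case (Suc k)
  have "d \<noteq> 0" using d by auto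
  have "Fract w (d ^ Suc k) = Fract (w mod d) (d ^ Suc k) + Fract ((w div d) * d) (d ^ Suc k)"
    by (simp add: add_Fract_same_denom del: add_fract)
  also have "Fract ((w div d) * d) (d ^ Suc k) = Fract (w div d) (d ^ k)"
    using \<open>d \<noteq> 0\<close> by (simp add: eq_fract(1) algebra_simps)
  finally have eq: "Fract w (d ^ Suc k) = Fract (w mod d) (d ^ Suc k) + Fract (w div d) (d ^ k)" .
  have "has_pfd (Fract (w mod d) (d ^ Suc k))"
    using d degree_mod_less[OF \<open>d \<noteq> 0\<close>, of w] degree_pos_if_irreducible[OF d(2)]
    by (intro has_pfd_Fract_reduced) auto
  then show ?case unfolding eq using Suc.IH has_pfd_add by blast
qed

lemma monic_irreducible_factor_exists:
  fixes m :: "'a::field poly"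
  assumes "degree m > 0"
  shows "\<exists>d. lead_coeff d = 1 \<and> irreducible d \<and> d dvd m"
  using assms
proof (induction "degree m" arbitrary: m rule: less_induct)
  case less
  have "m \<noteq> 0" using less.prems by auto
  show ?case
  proof (cases "irreducible m")
    case True
    have "lead_coeff m \<noteq> 0" using \<open>m \<noteq> 0\<close> by simp
    then have unit: "is_unit [:inverse (lead_coeff m):]" by (simp add: is_unit_triv)
    have "monic_of m = [:inverse (lead_coeff m):] * m" by (simp add: monic_of_def)
    then have "irreducible (monic_of m)"
      using True irreducible_mult_unit_left[OF unit] by simp
    moreover have "lead_coeff (monic_of m) = 1"
      using \<open>lead_coeff m \<noteq> 0\<close> by (simp add: monic_of_def)
    moreover have "m = [:lead_coeff m:] * monic_of m"
      using \<open>lead_coeff m \<noteq> 0\<close> by (simp add: monic_of_def)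
    then have "monic_of m dvd m" by (metis dvd_triv_right)
    ultimately show ?thesis by blast
  next
    case False
    moreover have "\<not> is_unit m" using less.prems is_unit_iff_degree[OF \<open>m \<noteq> 0\<close>] by simp
    ultimately obtain a b where mab: "m = a * b" "\<not> is_unit a" "\<not> is_unit b"
      using \<open>m \<noteq> 0\<close> unfolding irreducible_def by blast
    then have "a \<noteq> 0" "b \<noteq> 0" using \<open>m \<noteq> 0\<close> by auto
    then have "degree a > 0" "degree b > 0" using mab is_unit_iff_degree by auto
    moreover have "degree m = degree a + degree b"
      using mab \<open>a \<noteq> 0\<close> \<open>b \<noteq> 0\<close> by (simp add: degree_mult_eq)
    ultimately obtain d where "lead_coeff d = 1 \<and> irreducible d \<and> d dvd a"
      using less.hyps[of a] by auto
    then show ?thesis using mab by (auto intro: dvd_mult2)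
  qed
qed

lemma irreducible_power_factorization:
  fixes d m :: "'a::field poly"
  assumes irr: "irreducible d" and "m \<noteq> 0"
  shows "\<exists>k m'. m = d ^ k * m' \<and> \<not> d dvd m' \<and> (d dvd m \<longrightarrow> k \<ge> 1)"
  using assms(2)
proof (induction "degree m" arbitrary: m rule: less_induct)
  case less
  show ?case
  proof (cases "d dvd m")
    case False
    then show ?thesis by (intro exI[of _ 0] exI[of _ m]) simp
  next
    case True
    then obtain m1 where m: "m = d * m1" by (auto elim: dvdE)
    have "m1 \<noteq> 0" "d \<noteq> 0" using less.prems m irr by auto
    then have "degree m = degree d + degree m1" using m by (simp add: degree_mult_eq)
    then have "degree m1 < degree m" using degree_pos_if_irreducible[OF irr] by simp
    then obtain k m' where "m1 = d ^ k * m'" "\<not> d dvd m'"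
      using less.hyps \<open>m1 \<noteq> 0\<close> by blast
    then show ?thesis using m by (intro exI[of _ "Suc k"] exI[of _ m']) (simp add: mult.assoc)
  qed
qed

lemma irreducible_power_bezout:
  fixes d m :: "'a::field poly"
  assumes irr: "irreducible d" and nd: "\<not> d dvd m"
  shows "\<exists>u v. u * d ^ k + v * m = 1"
proof (induction k)
  case 0
  then show ?case by (intro exI[of _ 1] exI[of _ 0]) simp
next
  case (Suc k)
  then obtain u v where uv: "u * d ^ k + v * m = 1" by blast
  obtain u1 v1 where uv1: "u1 * d + v1 * m = 1" using irreducible_poly_bezout[OF irr nd] by blast
  have "(u * d ^ k + v * m) * (u1 * d + v1 * m) = 1" using uv uv1 by simp
  then have "(u * u1) * d ^ Suc k + (u * d ^ k * v1 + v * u1 * d + v * v1 * m) * m = 1"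
    by (simp add: algebra_simps)
  then show ?case by blast
qed

text \<open>Induction on the degree of the denominator: split off the full power of one monic
  irreducible factor by a Bezout identity.\<close>

lemma has_pfd_Fract:
  fixes m :: "'a::field poly"
  assumes "m \<noteq> 0"
  shows "has_pfd (Fract n m)"
  using assms
proof (induction "degree m" arbitrary: m n rule: less_induct)
  case less
  show ?case
  proof (cases "degree m = 0")
    case True
    then obtain c where "m = [:c:]" "c \<noteq> 0" using less.prems by (metis degree_eq_zeroE pCons_0_0)
    then have "Fract n m = Fract (smult (inverse c) n) 1"
      by (simp add: eq_fract(1))
    then show ?thesis using is_pfd_Fract_1 unfolding has_pfd_def by metis
  next
    case False
    then obtain d where d: "lead_coeff d = 1" "irreducible d" "d dvd m"
      using monic_irreducible_factor_exists by blast
    obtain k m' where km: "m = d ^ k * m'" "\<not> d dvd m'" "k \<ge> 1"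
      using irreducible_power_factorization[OF d(2) less.prems] d(3) by blast
    have "d \<noteq> 0" "m' \<noteq> 0" using d km less.prems by auto
    then have "degree m = k * degree d + degree m'"
      using km by (simp add: degree_mult_eq degree_power_eq)
    then have "degree m' < degree m"
      using km degree_pos_if_irreducible[OF d(2)] by simp
    obtain u v where uv: "u * d ^ k + v * m' = 1"
      using irreducible_power_bezout[OF d(2) km(2)] by blast
    have "Fract (n * u) m' + Fract (n * v) (d ^ k) = Fract (n * (u * d ^ k + v * m')) (m' * d ^ k)"
      using \<open>m' \<noteq> 0\<close> \<open>d \<noteq> 0\<close> by (simp add: algebra_simps)
    also have "\<dots> = Fract n m" using uv km by (simp add: mult.commute)
    finally have "Fract n m = Fract (n * u) m' + Fract (n * v) (d ^ k)" ..
    moreover have "has_pfd (Fract (n * u) m')"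
      using less.hyps \<open>degree m' < degree m\<close> \<open>m' \<noteq> 0\<close> by blast
    moreover have "has_pfd (Fract (n * v) (d ^ k))"
      by (rule has_pfd_Fract_irreducible_power[OF d(1,2)])
    ultimately show ?thesis using has_pfd_add by simp
  qed
qed

lemma is_pfd_pfd_coeffs: "\<exists>p. is_pfd f p (pfd_coeffs f)"
proof -
  have "has_pfd f" by (cases f) (simp add: has_pfd_Fract)
  then obtain p A where "is_pfd f p A" by (auto simp: has_pfd_def)
  moreover have "pfd_coeffs f = A"
    unfolding pfd_coeffs_def by (rule the_equality) (use \<open>is_pfd f p A\<close> is_pfd_unique in blast)+
  ultimately show ?thesis by blast
qed

section \<open>Transport along coefficientwise automorphisms\<close>

lemma pfd_support_transfer:
  assumes hg: "inverse_ring_homs h g"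
  shows "pfd_support (\<lambda>e j. h (A (g e) j)) = (\<lambda>(d, j). (h d, j)) ` pfd_support A"
proof (intro set_eqI iffI)
  fix x assume "x \<in> pfd_support (\<lambda>e j. h (A (g e) j))"
  then obtain e j where "x = (e, j)" "A (g e) j \<noteq> 0"
    by (auto simp: pfd_support_def inverse_ring_homs_eq_0_iff[OF hg])
  then show "x \<in> (\<lambda>(d, j). (h d, j)) ` pfd_support A"
    by (auto simp: pfd_support_def inverse_ring_homs_right[OF hg] intro!: image_eqI[of _ _ "(g e, j)"])
next
  fix x assume "x \<in> (\<lambda>(d, j). (h d, j)) ` pfd_support A"
  then show "x \<in> pfd_support (\<lambda>e j. h (A (g e) j))"
    by (auto simp: pfd_support_def inverse_ring_homs_eq_0_iff[OF hg] inverse_ring_homs_left[OF hg])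
qed

lemma admissible_pfd_map:
  assumes hg: "inverse_ring_homs h g" and A: "admissible_pfd A"
  shows "admissible_pfd (\<lambda>e j. map_poly h (A (map_poly g e) j))"
proof -
  have HG: "inverse_ring_homs (map_poly h) (map_poly g)" by (rule inverse_ring_homs_map_poly[OF hg])
  have mapped: "lead_coeff (map_poly h d) = 1 \<and> irreducible (map_poly h d) \<and> j \<ge> 1
      \<and> degree (map_poly h (A d j)) < degree (map_poly h d)" if "A d j \<noteq> 0" for d j
  proof -
    have d: "lead_coeff d = 1" "irreducible d" "j \<ge> 1" "degree (A d j) < degree d"
      using that A by (auto simp: admissible_pfd_def)
    have "lead_coeff (map_poly h d) = 1"
      using lead_coeff_map_poly_inverse_ring_homs[OF hg, of d] d(1)
      by (simp add: ring_hom_1[OF inverse_ring_homs_ring_hom[OF hg]])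
    then show ?thesis
      using d inverse_ring_homs_irreducible[OF HG d(2)]
      by (simp add: degree_map_poly_inverse_ring_homs[OF hg])
  qed
  have "finite (pfd_support (\<lambda>e j. map_poly h (A (map_poly g e) j)))"
    using A by (simp add: pfd_support_transfer[OF HG] admissible_pfd_def)
  moreover have "lead_coeff e = 1 \<and> irreducible e \<and> j \<ge> 1 \<and> degree (map_poly h (A (map_poly g e) j)) < degree e"
    if "map_poly h (A (map_poly g e) j) \<noteq> 0" for e j
    using that mapped[of "map_poly g e" j] inverse_ring_homs_right[OF HG, of e]
    by (cases "A (map_poly g e) j = 0") auto
  ultimately show ?thesis by (simp add: admissible_pfd_def)
qed

lemma pfd_sum_map:
  assumes hg: "inverse_ring_homs h g"
  shows "fract_lift (map_poly h) (pfd_sum A) = pfd_sum (\<lambda>e j. map_poly h (A (map_poly g e) j))"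
proof -
  define H where "H = map_poly h"
  define G where "G = map_poly g"
  have HG: "inverse_ring_homs H G" unfolding H_def G_def by (rule inverse_ring_homs_map_poly[OF hg])
  note H = inverse_ring_homs_ring_hom[OF HG] inverse_ring_homs_inj[OF HG]
  define relabel where "relabel = (\<lambda>(d :: 'a poly, j :: nat). (H d, j))"
  have "inj_on relabel X" for X
    using H(2) by (auto simp: relabel_def inj_on_def dest: injD)
  have "fract_lift H (pfd_sum A) = (\<Sum>x\<in>pfd_support A. fract_lift H (case x of (d, j) \<Rightarrow> Fract (A d j) (d ^ j)))"
    unfolding pfd_sum_def by (rule ring_hom_sum[OF ring_hom_fract_lift[OF H]])
  also have "\<dots> = (\<Sum>x\<in>pfd_support A. case relabel x of (e, j) \<Rightarrow> Fract (H (A (G e) j)) (e ^ j))"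
    by (simp add: relabel_def split_def fract_lift_Fract[OF H] ring_hom_power[OF H(1)]
        inverse_ring_homs_left[OF HG])
  also have "\<dots> = (\<Sum>y\<in>relabel ` pfd_support A. case y of (e, j) \<Rightarrow> Fract (H (A (G e) j)) (e ^ j))"
    by (rule sum.reindex[OF \<open>inj_on relabel _\<close>, symmetric, unfolded comp_def])
  also have "\<dots> = pfd_sum (\<lambda>e j. H (A (G e) j))"
    unfolding pfd_sum_def pfd_support_transfer[OF HG] relabel_def ..
  finally show ?thesis unfolding H_def G_def .
qed

lemma pfd_coeffs_map:
  assumes hg: "inverse_ring_homs h g"
  shows "pfd_coeffs (fract_lift (map_poly h) f) e j = map_poly h (pfd_coeffs f (map_poly g e) j)"
proof -
  have HG: "inverse_ring_homs (map_poly h) (map_poly g)" by (rule inverse_ring_homs_map_poly[OF hg])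
  note H = inverse_ring_homs_ring_hom[OF HG] inverse_ring_homs_inj[OF HG]
  obtain p where pfd: "is_pfd f p (pfd_coeffs f)" using is_pfd_pfd_coeffs by blast
  then have "fract_lift (map_poly h) f
      = fract_lift (map_poly h) (Fract p 1) + fract_lift (map_poly h) (pfd_sum (pfd_coeffs f))"
    by (subst ring_hom_add[OF ring_hom_fract_lift[OF H], symmetric]) (simp add: is_pfd_iff)
  also have "\<dots> = Fract (map_poly h p) 1 + pfd_sum (\<lambda>e j. map_poly h (pfd_coeffs f (map_poly g e) j))"
    by (simp add: fract_lift_Fract[OF H] ring_hom_1[OF H(1)] pfd_sum_map[OF hg])
  finally have "is_pfd (fract_lift (map_poly h) f) (map_poly h p)
      (\<lambda>e j. map_poly h (pfd_coeffs f (map_poly g e) j))"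
    using pfd admissible_pfd_map[OF hg] by (simp add: is_pfd_iff)
  then show ?thesis
    using is_pfd_pfd_coeffs is_pfd_unique by metis
qed

lemma map_poly_monic_of:
  assumes hg: "inverse_ring_homs h g"
  shows "map_poly h (monic_of p) = monic_of (map_poly h p)"
  using inverse_ring_homs_ring_hom[OF hg]
  by (intro poly_eqI) (simp add: monic_of_def ring_hom_coeff_map_poly ring_hom_mult
      ring_hom_inverse lead_coeff_map_poly_inverse_ring_homs[OF hg])

lemma map_poly_sigma_y_pow:
  assumes h: "is_ring_hom h"
  shows "map_poly h (sigma_y_pow l p) = sigma_y_pow l (map_poly h p)"
proof -
  have "map_poly h [:of_int l, 1:] = [:of_int l, 1:]"
    by (simp add: map_poly_pCons ring_hom_0[OF h] ring_hom_of_int[OF h] ring_hom_1[OF h])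
  then show ?thesis by (simp add: sigma_y_pow_def map_poly_pcompose[OF h])
qed

text \<open>An automorphism \<open>h\<close> of \<open>K = k(x)\<close> fixing \<open>k\<close>, with inverse \<open>g\<close>; \<^const>\<open>sigma_x\<close> and
  \<^const>\<open>tau_x\<close> are \<open>fract_lift (map_poly h)\<close> for such \<open>h\<close>.\<close>

locale constant_fixing_automorphism =
  fixes h g :: "'k::field poly fract \<Rightarrow> 'k poly fract"
  assumes inverse_homs: "inverse_ring_homs h g"
    and fixes_constants: "\<And>c. h (Fract [:c:] 1) = Fract [:c:] 1"
begin

lemma map_poly_fixes_emb: "map_poly h (emb_kxy (emb_ky d)) = emb_kxy (emb_ky d)"
  using inverse_ring_homs_ring_hom[OF inverse_homs]
  by (intro poly_eqI) (simp add: emb_kxy_def emb_ky_def coeff_map_poly ring_hom_0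
      fract_collapse(1) fixes_constants)

lemma map_poly_fixes_shifted_monic_emb:
  "map_poly h (sigma_y_pow l (monic_of (emb_kxy (emb_ky d)))) = sigma_y_pow l (monic_of (emb_kxy (emb_ky d)))"
  by (simp add: map_poly_sigma_y_pow inverse_ring_homs_ring_hom[OF inverse_homs]
      map_poly_monic_of[OF inverse_homs] map_poly_fixes_emb)

lemma inverse_map_poly_fixes_shifted_monic_emb:
  "map_poly g (sigma_y_pow l (monic_of (emb_kxy (emb_ky d)))) = sigma_y_pow l (monic_of (emb_kxy (emb_ky d)))"
  using inverse_ring_homs_left[OF inverse_ring_homs_map_poly[OF inverse_homs],
      of "sigma_y_pow l (monic_of (emb_kxy (emb_ky d)))"]
  by (simp only: map_poly_fixes_shifted_monic_emb)

lemma res_D_map: "res_D (fract_lift (map_poly h) f) (emb_kxy (emb_ky d)) = map_poly h (res_D f (emb_kxy (emb_ky d)))"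
  using inverse_map_poly_fixes_shifted_monic_emb[of 0 d]
  by (simp add: res_D_def pfd_coeffs_map[OF inverse_homs] sigma_y_pow_def)

lemma res_sigma_map:
  "res_sigma (fract_lift (map_poly h) f) (emb_kxy (emb_ky d)) j = map_poly h (res_sigma f (emb_kxy (emb_ky d)) j)"
proof -
  have H: "is_ring_hom (map_poly h)"
    by (rule ring_hom_map_poly[OF inverse_ring_homs_ring_hom[OF inverse_homs]])
  have H0: "map_poly h p = 0 \<longleftrightarrow> p = 0" for p
    using inverse_ring_homs_eq_0_iff[OF inverse_ring_homs_map_poly[OF inverse_homs]] .
  show ?thesis
    unfolding res_sigma_def pfd_coeffs_map[OF inverse_homs] inverse_map_poly_fixes_shifted_monic_emb
      H0 ring_hom_sum[OF H]
    by (simp add: map_poly_sigma_y_pow inverse_ring_homs_ring_hom[OF inverse_homs])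
qed

end

lemma fract_lift_fixes_constants:
  assumes hg: "inverse_ring_homs h g" and "\<And>c. h [:c:] = [:c:]"
  shows "fract_lift h (Fract [:c:] 1) = Fract [:c:] (1 :: 'k::field poly)"
  using assms fract_lift_Fract[OF inverse_ring_homs_ring_hom[OF hg] inverse_ring_homs_inj[OF hg]]
  by (simp add: ring_hom_1[OF inverse_ring_homs_ring_hom[OF hg]])

lemma inverse_ring_homs_pcompose_linear:
  fixes a b c e :: "'a::field"
  assumes "pcompose [:a, b:] [:c, e:] = [:0, 1:]" "pcompose [:c, e:] [:a, b:] = [:0, 1:]"
  shows "inverse_ring_homs (\<lambda>p. pcompose p [:a, b:]) (\<lambda>p. pcompose p [:c, e:])"
  using assms by (simp add: inverse_ring_homs_def ring_hom_pcompose pcompose_assoc[symmetric])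

lemma inverse_ring_homs_shiftx_poly: "inverse_ring_homs (shiftx_poly c) (shiftx_poly (- c))"
  unfolding shiftx_poly_def by (rule inverse_ring_homs_pcompose_linear) (simp_all add: pcompose_pCons)

lemma inverse_ring_homs_qdil_poly: "q \<noteq> 0 \<Longrightarrow> inverse_ring_homs (qdil_poly q) (qdil_poly (inverse q))"
  unfolding qdil_poly_def by (rule inverse_ring_homs_pcompose_linear) (simp_all add: pcompose_pCons)

lemma constant_fixing_automorphism_sigma_x_K:
  "constant_fixing_automorphism sigma_x_K (fract_lift (shiftx_poly (- 1)))"
  unfolding constant_fixing_automorphism_def sigma_x_K_def
  by (intro conjI allI inverse_ring_homs_fract_lift[OF inverse_ring_homs_shiftx_poly]
      fract_lift_fixes_constants[OF inverse_ring_homs_shiftx_poly]) (simp add: shiftx_poly_def)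

lemma constant_fixing_automorphism_tau_x_K:
  "q \<noteq> 0 \<Longrightarrow> constant_fixing_automorphism (tau_x_K q) (fract_lift (qdil_poly (inverse q)))"
  unfolding constant_fixing_automorphism_def tau_x_K_def
  by (intro conjI allI inverse_ring_homs_fract_lift[OF inverse_ring_homs_qdil_poly]
      fract_lift_fixes_constants[OF inverse_ring_homs_qdil_poly]) (simp_all add: qdil_poly_def)

theorem lemma1:
  fixes q :: "'k::field_char_0"
    and a b :: "'k poly poly"
    and d :: "'k poly"
    and f :: "'k poly fract poly fract"
  assumes "q \<noteq> 0"
    and "b \<noteq> 0"
    and "f = Fract (emb_kxy a) (emb_kxy b)"
    and "irreducible d"
    and "emb_ky d dvd b"
  shows "res_D (sigma_x f) (emb_kxy (emb_ky d)) = sigma_x_Ky (res_D f (emb_kxy (emb_ky d)))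
    \<and> res_D (tau_x q f) (emb_kxy (emb_ky d)) = tau_x_Ky q (res_D f (emb_kxy (emb_ky d)))
    \<and> (\<forall>j::nat. res_sigma (tau_x q f) (emb_kxy (emb_ky d)) j
                 = tau_x_Ky q (res_sigma f (emb_kxy (emb_ky d)) j))"
proof -
  interpret sigma: constant_fixing_automorphism sigma_x_K "fract_lift (shiftx_poly (- 1))"
    by (rule constant_fixing_automorphism_sigma_x_K)
  interpret tau: constant_fixing_automorphism "tau_x_K q" "fract_lift (qdil_poly (inverse q))"
    by (rule constant_fixing_automorphism_tau_x_K[OF \<open>q \<noteq> 0\<close>])
  have sigma_x: "sigma_x = fract_lift (map_poly sigma_x_K)"
    and tau_x: "tau_x q = fract_lift (map_poly (tau_x_K q))"
    by (simp_all add: sigma_x_def sigma_x_Ky_def tau_x_def tau_x_Ky_def fun_eq_iff)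
  show ?thesis
    unfolding sigma_x tau_x sigma_x_Ky_def tau_x_Ky_def
    using sigma.res_D_map tau.res_D_map tau.res_sigma_map by blast
qed

end
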